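(* ${\sf MBRev}(\mathcal D_{ERC}(H))=O(\log\log H)$ as $H\to\infty$.
   Context: $\mathcal D_{ERC}(H)$ (equal revenue curve truncated at $H$) is the distribution on $[1,H]$ with $\Pr[v\ge t]=1/t$ for $t\in[1,H]$, i.e. density $q(v)=1/v^2$ on $[1,H)$ and an atom of mass $1/H$ at $H$. For a distribution with density $q$ on $[1,H]$ the mean-based revenue is ${\sf MBRev}=\sup_{x}\int_1^H q(v)\big(v\,x(v)-\sup_{1\le w<v}(v-w)x(w)\big)\,dv$ (plus the contribution $\Pr[H]\cdot(Hx(H)-\sup_{w<H}(H-w)x(w))$ of the atom), where the supremum is over functions $x:[1,H]\to[0,1]$. *)

theory Defs
  imports "HOL-Analysis.Analysis"
begin

definition mb_pen :: "(real \<Rightarrow> real) \<Rightarrow> real \<Rightarrow> real" where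
  "mb_pen x v = (if 1 < v then Sup {(v - w) * x w | w. 1 \<le> w \<and> w < v} else 0)"

text \<open>Integrand: density 1/v^2 of the truncated equal revenue curve on [1,H).\<close>
definition erc_integrand :: "(real \<Rightarrow> real) \<Rightarrow> real \<Rightarrow> real" where
  "erc_integrand x v = (1 / v^2) * (v * x v - mb_pen x v)"

text \<open>Mean-based revenue of allocation x on D_ERC(H): continuous part plus atom 1/H at H.\<close>
definition erc_mb_rev :: "real \<Rightarrow> (real \<Rightarrow> real) \<Rightarrow> real" where
  "erc_mb_rev H x = (LINT v:{1..<H}|lborel. erc_integrand x v)
      + (1 / H) * (H * x H - mb_pen x H)"

definition erc_feasible :: "real \<Rightarrow> (real \<Rightarrow> real) \<Rightarrow> bool" where
  "erc_feasible H x \<longleftrightarrow> (\<forall>v\<in>{1..H}. 0 \<le> x v \<and> x v \<le> 1)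
      \<and> set_integrable lborel {1..<H} (erc_integrand x)"

definition MBRev_ERC :: "real \<Rightarrow> ereal" where
  "MBRev_ERC H = (SUP x\<in>{x. erc_feasible H x}. ereal (erc_mb_rev H x))"

end

theory Submission
  imports Defs
begin

text \<open>Write \<open>G(v) = pen(v)/v\<close> for the penalty ratio, which is nondecreasing with values in
  \<open>[0,1]\<close>; the integrand is \<open>(x(v) - G(v))/v\<close>. Fix \<open>K > 1\<close>. A value \<open>Kv \<le> H\<close> may deviate to
  the bid \<open>v\<close>, so \<open>(K - 1) v x(v) \<le> pen(Kv)\<close>, i.e. \<open>x(v) \<le> K/(K-1) G(Kv)\<close>; for \<open>v > H/K\<close>
  use \<open>x(v) \<le> 1\<close>. Since \<open>dv/v\<close> is invariant under \<open>v \<mapsto> Kv\<close>, the positive part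
  \<open>\<integral>\<^sub>1\<^sup>H\<^sup>/\<^sup>K G(Kv)/v dv\<close> equals \<open>\<integral>\<^sub>K\<^sup>H G(u)/u du\<close>, which the negative part cancels up to the
  factor \<open>1/(K-1)\<close>. The revenue is thus at most \<open>(ln H - ln K)/(K-1) + ln K + 1\<close>, the last
  term bounding the atom; \<open>K = ln H\<close> gives \<open>O(ln ln H)\<close>.\<close>

lemma mb_pen_bdd_above:
  fixes x :: "real \<Rightarrow> real"
  assumes "\<And>w. w \<in> {1..<v} \<Longrightarrow> x w \<le> 1"
  shows "bdd_above {(v - w) * x w | w. 1 \<le> w \<and> w < v}"
proof (rule bdd_aboveI)
  fix y assume "y \<in> {(v - w) * x w | w. 1 \<le> w \<and> w < v}"
  then obtain w where y: "y = (v - w) * x w" "1 \<le> w" "w < v" by blast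
  then have "(v - w) * x w \<le> v - w"
    using assms by (intro mult_left_le) auto
  then show "y \<le> v" using y by linarith
qed

lemma mb_pen_ge:
  fixes x :: "real \<Rightarrow> real"
  assumes "\<And>w. w \<in> {1..<v} \<Longrightarrow> x w \<le> 1" and "1 \<le> w" "w < v"
  shows "(v - w) * x w \<le> mb_pen x v"
proof -
  have "(v - w) * x w \<in> {(v - w) * x w | w. 1 \<le> w \<and> w < v}" using assms(2,3) by blast
  from cSup_upper[OF this mb_pen_bdd_above] show ?thesis
    using assms by (simp add: mb_pen_def)
qed

lemma mb_pen_nonneg:
  fixes x :: "real \<Rightarrow> real"
  assumes "\<And>w. w \<in> {1..<v} \<Longrightarrow> x w \<le> 1" and "0 \<le> x 1"
  shows "0 \<le> mb_pen x v"
proof (cases "1 < v")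
  case True
  then have "(v - 1) * x 1 \<le> mb_pen x v"
    using mb_pen_ge[where x=x and v=v and w=1, OF assms(1)] by simp
  moreover have "0 \<le> (v - 1) * x 1" using True assms(2) by simp
  ultimately show ?thesis by linarith
qed (simp add: mb_pen_def)

lemma mb_pen_le:
  fixes x :: "real \<Rightarrow> real"
  assumes "\<And>w. w \<in> {1..<v} \<Longrightarrow> x w \<le> 1" and "1 \<le> v"
  shows "mb_pen x v \<le> v - 1"
proof (cases "1 < v")
  case True
  have "Sup {(v - w) * x w | w. 1 \<le> w \<and> w < v} \<le> v - 1"
  proof (rule cSup_least)
    show "{(v - w) * x w | w. 1 \<le> w \<and> w < v} \<noteq> {}" using True by auto
  next
    fix y assume "y \<in> {(v - w) * x w | w. 1 \<le> w \<and> w < v}"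
    then obtain w where y: "y = (v - w) * x w" "1 \<le> w" "w < v" by blast
    then have "(v - w) * x w \<le> v - w"
      using assms by (intro mult_left_le) auto
    then show "y \<le> v - 1" using y by linarith
  qed
  then show ?thesis using True by (simp add: mb_pen_def)
qed (use assms in \<open>simp add: mb_pen_def\<close>)

lemma mb_pen_ratio_mono:
  fixes x :: "real \<Rightarrow> real"
  assumes x_bounds: "\<And>w. w \<in> {1..<u'} \<Longrightarrow> 0 \<le> x w \<and> x w \<le> 1" and u: "1 < u" "u \<le> u'"
  shows "mb_pen x u / u \<le> mb_pen x u' / u'"
proof -
  have "Sup {(u - w) * x w | w. 1 \<le> w \<and> w < u} \<le> u / u' * mb_pen x u'"
  proof (rule cSup_least)
    show "{(u - w) * x w | w. 1 \<le> w \<and> w < u} \<noteq> {}" using u by auto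
  next
    fix y assume "y \<in> {(u - w) * x w | w. 1 \<le> w \<and> w < u}"
    then obtain w where y: "y = (u - w) * x w" "1 \<le> w" "w < u" by blast
    have "u - w \<le> u / u' * (u' - w)" using u y by (simp add: field_simps)
    moreover have "0 \<le> x w" using x_bounds[of w] y u by simp
    ultimately have "(u - w) * x w \<le> u / u' * ((u' - w) * x w)"
      by (metis mult.assoc mult_right_mono)
    also have "\<dots> \<le> u / u' * mb_pen x u'"
      using mb_pen_ge[where x=x and v=u' and w=w] x_bounds y u by (intro mult_left_mono) auto
    finally show "y \<le> u / u' * mb_pen x u'" using y by simp
  qed
  then have "mb_pen x u \<le> u / u' * mb_pen x u'" using u by (simp add: mb_pen_def)
  then show ?thesis using u by (simp add: field_simps)
qed

lemma integrable_inverse_Icc: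
  fixes a b :: real
  assumes "0 < a"
  shows "integrable lborel (\<lambda>v. indicator {a..b} v * (1/v))"
proof -
  have "continuous_on {a..b} (\<lambda>v::real. 1/v)" using assms by (intro continuous_intros) auto
  from borel_integrable_atLeastAtMost'[OF this] show ?thesis
    by (simp add: set_integrable_def mult.commute)
qed

lemma integral_inverse_Icc:
  fixes a b :: real
  assumes "0 < a" "a \<le> b"
  shows "(\<integral>v. indicator {a..b} v * (1/v) \<partial>lborel) = ln b - ln a"
proof -
  have "(LBINT v=a..b. 1/v) = ln b - ln a"
  proof (rule interval_integral_FTC_finite)
    show "continuous_on {min a b..max a b} (\<lambda>v::real. 1/v)"
      using assms by (intro continuous_intros) auto
    fix v assume "min a b \<le> v" "v \<le> max a b"
    then have "0 < v" using assms by simp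
    then show "(ln has_vector_derivative 1 / v) (at v within {min a b..max a b})"
      by (auto intro!: derivative_eq_intros
          simp: has_real_derivative_iff_has_vector_derivative[symmetric])
  qed
  then show ?thesis
    using interval_integral_Icc[OF assms(2), of "\<lambda>v. 1/v"] by (simp add: set_lebesgue_integral_def)
qed

lemma integrable_indicator_Icc_divide:
  fixes g :: "real \<Rightarrow> real"
  assumes g: "g \<in> borel_measurable borel" "\<And>v. v \<in> {a..b} \<Longrightarrow> \<bar>g v\<bar> \<le> 1" and "0 < a"
  shows "integrable lborel (\<lambda>v. indicator {a..b} v * (g v / v))"
proof (rule Bochner_Integration.integrable_bound[OF integrable_inverse_Icc[OF \<open>0 < a\<close>]])
  show "(\<lambda>v. indicator {a..b} v * (g v / v)) \<in> borel_measurable lborel"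
    using g(1) by measurable
  have "norm (indicator {a..b} v * (g v / v)) \<le> norm (indicator {a..b} v * (1 / v))" for v
    using g(2)[of v] \<open>0 < a\<close> by (auto simp: indicator_def abs_div divide_right_mono)
  then show "AE v in lborel. norm (indicator {a..b} v * (g v / v))
      \<le> norm (indicator {a..b} v * (1 / v))" by simp
qed

lemma integral_dilation_Icc_divide:
  fixes g :: "real \<Rightarrow> real" and c :: real
  assumes "0 < c"
  shows "(\<integral>v. indicator {a/c..b/c} v * (g (c * v) / v) \<partial>lborel)
       = (\<integral>u. indicator {a..b} u * (g u / u) \<partial>lborel)"
proof -
  have "(\<integral>u. indicator {a..b} u * (g u / u) \<partial>lborel)
      = c * (\<integral>v. indicator {a..b} (c * v) * (g (c * v) / (c * v)) \<partial>lborel)"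
    using lborel_integral_real_affine[of c "\<lambda>u. indicator {a..b} u * (g u / u)" 0] assms
    by simp
  also have "\<dots> = (\<integral>v. c * (indicator {a..b} (c * v) * (g (c * v) / (c * v))) \<partial>lborel)"
    by (rule integral_mult_right_zero[symmetric])
  also have "\<dots> = (\<integral>v. indicator {a/c..b/c} v * (g (c * v) / v) \<partial>lborel)"
  proof (rule Bochner_Integration.integral_cong[OF refl])
    fix v
    have "indicator {a..b} (c * v) = (indicator {a/c..b/c} v :: real)"
      using assms by (simp add: indicator_def field_simps)
    then show "c * (indicator {a..b} (c * v) * (g (c * v) / (c * v)))
        = indicator {a/c..b/c} v * (g (c * v) / v)" using assms by simp
  qed
  finally show ?thesis by simp
qed

text \<open>Clamping the argument to \<open>[1,H]\<close> turns the penalty ratio into a monotone function on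
  all of \<open>\<real>\<close>, hence a Borel measurable one.\<close>
definition pen_ratio :: "real \<Rightarrow> (real \<Rightarrow> real) \<Rightarrow> real \<Rightarrow> real" where
  "pen_ratio H x v = mb_pen x (max 1 (min H v)) / max 1 (min H v)"

context
  fixes H :: real and x :: "real \<Rightarrow> real"
  assumes x_bounds: "\<forall>v\<in>{1..H}. 0 \<le> x v \<and> x v \<le> 1"
begin

lemma x_le_1_below: "u \<le> H \<Longrightarrow> w \<in> {1..<u} \<Longrightarrow> x w \<le> 1"
  using x_bounds by auto

lemma pen_ratio_eq: "1 \<le> v \<Longrightarrow> v \<le> H \<Longrightarrow> pen_ratio H x v = mb_pen x v / v"
  by (simp add: pen_ratio_def)

lemma pen_ratio_nonneg: "0 \<le> pen_ratio H x v"
proof (cases "1 \<le> H")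
  case True
  then show ?thesis
    using x_bounds
      mb_pen_nonneg[where x=x and v="max 1 (min H v)", OF x_le_1_below[of "max 1 (min H v)"]]
    by (auto simp: pen_ratio_def)
qed (simp add: pen_ratio_def mb_pen_def)

lemma pen_ratio_le_1: "pen_ratio H x v \<le> 1"
proof (cases "1 \<le> H")
  case True
  then show ?thesis
    using mb_pen_le[where x=x and v="max 1 (min H v)", OF x_le_1_below[of "max 1 (min H v)"]]
    by (auto simp: pen_ratio_def)
qed (simp add: pen_ratio_def mb_pen_def)

lemma mono_pen_ratio: "mono (pen_ratio H x)"
proof (rule monoI)
  fix u u' :: real assume "u \<le> u'"
  define c where "c v = max 1 (min H v)" for v
  have c: "c u \<le> c u'" "c u' \<le> H \<or> c u' = 1" using \<open>u \<le> u'\<close> by (auto simp: c_def)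
  show "pen_ratio H x u \<le> pen_ratio H x u'"
  proof (cases "c u = 1")
    case True
    then show ?thesis using pen_ratio_nonneg[of u'] by (simp add: pen_ratio_def mb_pen_def c_def)
  next
    case False
    then have "1 < c u" by (simp add: c_def)
    then show ?thesis
      using mb_pen_ratio_mono[where x=x and u="c u" and u'="c u'"] x_bounds c by (auto simp: pen_ratio_def c_def)
  qed
qed

lemma erc_integrand_le:
  assumes K: "1 < K" "K \<le> H" and v: "1 \<le> v" "v < H"
  shows "erc_integrand x v \<le> K/(K-1) * (indicator {1..H/K} v * (pen_ratio H x (K * v) / v))
     + indicator {H/K..H} v * (1/v) - indicator {K..H} v * (pen_ratio H x v / v)"
proof -
  let ?G = "pen_ratio H x"
  have "erc_integrand x v = x v / v - ?G v / v"
    using v pen_ratio_eq[of v] by (simp add: erc_integrand_def power2_eq_square field_simps)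
  moreover have "indicator {K..H} v * (?G v / v) \<le> ?G v / v"
    using pen_ratio_nonneg[of v] v by (simp add: indicator_def)
  moreover have "x v / v \<le> K/(K-1) * (indicator {1..H/K} v * (?G (K * v) / v))
      + indicator {H/K..H} v * (1/v)"
  proof (cases "v \<le> H/K")
    case True
    then have Kv: "1 < K * v" "K * v \<le> H"
      using K v by (auto simp: field_simps intro: less_le_trans[of 1 K "K * v"])
    have "(K * v - v) * x v \<le> mb_pen x (K * v)"
      using mb_pen_ge[where x=x and v="K * v" and w=v, OF x_le_1_below[of "K * v"]] K v Kv
      by auto
    also have "\<dots> = K * v * ?G (K * v)" using pen_ratio_eq[of "K * v"] Kv by auto
    finally have "v * ((K - 1) * x v) \<le> v * (K * ?G (K * v))"
      by (simp add: algebra_simps)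
    then have "(K - 1) * x v \<le> K * ?G (K * v)"
      using v by (simp add: mult_le_cancel_left_pos)
    then have "x v \<le> K/(K-1) * ?G (K * v)"
      using K by (simp add: pos_le_divide_eq mult.commute)
    then have "x v / v \<le> K/(K-1) * ?G (K * v) / v"
      using v by (intro divide_right_mono) auto
    moreover have "0 \<le> indicator {H/K..H} v * (1/v)" using v by simp
    moreover have "K/(K-1) * ?G (K * v) / v
        = K/(K-1) * (indicator {1..H/K} v * (?G (K * v) / v))" using True v by simp
    ultimately show ?thesis by linarith
  next
    case False
    have "x v / v \<le> 1 / v" using x_bounds v by (intro divide_right_mono) auto
    moreover have "0 \<le> K/(K-1) * (indicator {1..H/K} v * (?G (K * v) / v))"
      using K v pen_ratio_nonneg[of "K * v"] by simp
    ultimately show ?thesis using False v by simp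
  qed
  ultimately show ?thesis by linarith
qed

lemma indicator_erc_integrand_le:
  assumes K: "1 < K" "K \<le> H"
  shows "indicator {1..<H} v * erc_integrand x v
     \<le> K/(K-1) * (indicator {1..H/K} v * (pen_ratio H x (K * v) / v))
     + indicator {H/K..H} v * (1/v) - indicator {K..H} v * (pen_ratio H x v / v)"
proof (cases "v \<in> {1..<H}")
  case True
  then show ?thesis using erc_integrand_le[OF K] by simp
next
  case False
  have HK: "1 \<le> H/K" "H/K \<le> H" using K by (auto simp: field_simps)
  have "0 \<le> K/(K-1)" using K by simp
  moreover have "0 \<le> indicator {1..H/K} v * (pen_ratio H x (K * v) / v)"
    using pen_ratio_nonneg[of "K * v"] by (simp add: indicator_def)
  ultimately have "0 \<le> K/(K-1) * (indicator {1..H/K} v * (pen_ratio H x (K * v) / v))"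
    by (rule mult_nonneg_nonneg)
  moreover have "indicator {K..H} v * (pen_ratio H x v / v) \<le> indicator {H/K..H} v * (1/v)"
  proof (cases "v = H")
    case True
    then show ?thesis using K HK pen_ratio_le_1[of v] by (simp add: divide_right_mono)
  qed (use False K HK(2) order_trans[OF HK(1)] in \<open>auto simp: indicator_def\<close>)
  ultimately show ?thesis using False by simp
qed

lemma borel_measurable_pen_ratio: "pen_ratio H x \<in> borel_measurable borel"
  by (rule borel_measurable_mono[OF mono_pen_ratio])

lemma abs_pen_ratio_le_1: "\<bar>pen_ratio H x v\<bar> \<le> 1"
  using pen_ratio_nonneg[of v] pen_ratio_le_1[of v] by simp

lemma erc_integral_le:
  assumes K: "1 < K" "K \<le> H" and int: "set_integrable lborel {1..<H} (erc_integrand x)"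
  shows "(LINT v:{1..<H}|lborel. erc_integrand x v) \<le> (ln H - ln K) / (K - 1) + ln K"
proof -
  let ?G = "pen_ratio H x"
  define A where "A = (\<lambda>v. indicator {1..H/K} v * (?G (K * v) / v))"
  define B where "B = (\<lambda>v. indicator {K..H} v * (?G v / v))"
  define L where "L = (\<lambda>v::real. indicator {H/K..H} v * (1 / v))"
  have HK: "1 \<le> H/K" "H/K \<le> H" "0 < K" using K by (auto simp: field_simps)
  have "(\<lambda>v. ?G (K * v)) \<in> borel_measurable borel"
    by (rule measurable_compose[OF _ borel_measurable_pen_ratio]) simp
  then have iA: "integrable lborel A"
    unfolding A_def by (intro integrable_indicator_Icc_divide abs_pen_ratio_le_1) simp_all
  have iB: "integrable lborel B"
    unfolding B_def using HK
    by (intro integrable_indicator_Icc_divide borel_measurable_pen_ratio abs_pen_ratio_le_1) simp_all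
  have iL: "integrable lborel L" unfolding L_def using HK by (intro integrable_inverse_Icc) simp
  have pointwise: "indicator {1..<H} v * erc_integrand x v \<le> K/(K-1) * A v + L v - B v" for v
    using indicator_erc_integrand_le[OF K] unfolding A_def B_def L_def by simp
  have "integral\<^sup>L lborel A = integral\<^sup>L lborel B"
    using integral_dilation_Icc_divide[where c=K and g="?G" and a=K and b=H] HK
    by (simp add: A_def B_def)
  moreover have "integral\<^sup>L lborel L = ln K"
    using integral_inverse_Icc[of "H/K" H] HK by (simp add: L_def ln_div)
  moreover have "integral\<^sup>L lborel B \<le> ln H - ln K"
  proof -
    have "integral\<^sup>L lborel B \<le> (\<integral>v. indicator {K..H} v * (1 / v) \<partial>lborel)"
      using HK pen_ratio_le_1
      by (intro integral_mono[OF iB integrable_inverse_Icc])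
        (auto simp: B_def indicator_def divide_right_mono)
    then show ?thesis using integral_inverse_Icc[of K H] HK K by simp
  qed
  moreover have "(LINT v:{1..<H}|lborel. erc_integrand x v)
      \<le> K/(K-1) * integral\<^sup>L lborel A + integral\<^sup>L lborel L - integral\<^sup>L lborel B"
  proof -
    have "(LINT v:{1..<H}|lborel. erc_integrand x v)
        \<le> (\<integral>v. K/(K-1) * A v + L v - B v \<partial>lborel)"
      using int pointwise iA iB iL unfolding set_lebesgue_integral_def set_integrable_def
      by (intro integral_mono) auto
    then show ?thesis using iA iB iL by simp
  qed
  ultimately show ?thesis using K by (simp add: field_simps)
qed

lemma erc_atom_le:
  assumes "1 \<le> H"
  shows "(1 / H) * (H * x H - mb_pen x H) \<le> 1"
proof -
  have "0 \<le> mb_pen x H"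
    using x_bounds assms by (intro mb_pen_nonneg[OF x_le_1_below[of H]]) auto
  then have "0 \<le> mb_pen x H / H" using assms by simp
  moreover have "(1 / H) * (H * x H - mb_pen x H) = x H - mb_pen x H / H"
    using assms by (simp add: field_simps)
  moreover have "x H \<le> 1" using x_bounds assms by simp
  ultimately show ?thesis by linarith
qed

lemma erc_mb_rev_le:
  assumes "1 < K" "K \<le> H" and "set_integrable lborel {1..<H} (erc_integrand x)"
  shows "erc_mb_rev H x \<le> (ln H - ln K) / (K - 1) + ln K + 1"
proof -
  have "1 \<le> H" using assms by linarith
  then show ?thesis
    using erc_integral_le[OF assms] erc_atom_le unfolding erc_mb_rev_def by linarith
qed

end

theorem theoremC7:
  shows "\<exists>C H0. \<forall>H\<ge>H0. MBRev_ERC H \<le> ereal (C * ln (ln H))"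
proof (intro exI allI impI)
  fix H :: real assume H: "exp (exp 1) \<le> H"
  define K where "K = ln H"
  have "exp 1 \<le> K"
    using H by (simp add: K_def ln_ge_iff order_less_le_trans[OF exp_gt_zero H])
  then have K: "2 \<le> K" "1 \<le> ln K"
    using exp_ge_add_one_self[of 1] by (simp_all add: ln_ge_iff)
  have "K \<le> H" using ln_less_self[OF order_less_le_trans[OF exp_gt_zero H]] by (simp add: K_def)
  have "ln H - ln K \<le> 2 * (K - 1)" using K by (simp add: K_def)
  then have "(ln H - ln K) / (K - 1) \<le> 2" using K by (simp add: divide_le_eq)
  then have "(ln H - ln K) / (K - 1) + ln K + 1 \<le> 4 * ln (ln H)"
    using K by (simp add: K_def)
  then have "erc_mb_rev H x \<le> 4 * ln (ln H)" if "erc_feasible H x" for x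
    using that erc_mb_rev_le[of H x K] \<open>K \<le> H\<close> K by (force simp: erc_feasible_def)
  then show "MBRev_ERC H \<le> ereal (4 * ln (ln H))"
    by (auto simp: MBRev_ERC_def intro!: SUP_least)
qed

end
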